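(* Let $R=F/I$ be a standard algebra, where $F=k\langle x_1,\dots,x_n\rangle$ and $x_1,\dots,x_n$ is a basis of $R_1$. The following are equivalent: (i) $R$ is initially Koszul with Groebner flag $(x_1,\dots,x_n)$; (ii) $R$ is PBW with respect to the degree-lexicographical order with $x_1<\dots<x_n$ (i.e. the reduced Groebner basis $G$ of $I$ with respect to this order consists of quadratic elements), and the set $\mathrm{lm}\,G$ of leading monomials of $G$ has the property: if $x_kx_j\in\mathrm{lm}\,G$ then $x_kx_i\in\mathrm{lm}\,G$ for all $i<j$; (iii) the monomial algebra $R'=F/(\mathrm{lm}\,G)$ (with $G$ the reduced Groebner basis of $I$ for the same order) is initially Koszul with Groebner flag $(x_1,\dots,x_n)$.
   Context: A standard algebra $R$: graded, $R_0=k$, generated by $R_1$; $R_+=\bigoplus_{i>0}R_i$. For a basis $x_1,\dots,x_n$ of $R_1$ let $I_k=x_1R+\dots+x_kR$ ($I_0=0$). A Koszul filtration is a family $\mathbf F$ of right ideals such that: (1) each member is generated by elements of $R_1$; (2) $0,R_+\in\mathbf F$; (3) for every $0\ne I\in\mathbf F$ there exist $J\in\mathbf F$, $J\ne I$, and $x\in R_1$ with $I=J+xR$ and $(J:x)=\{a\in R: xa\in J\}\in\mathbf F$. $R$ is initially Koszul with Groebner flag $(x_1,\dots,x_n)$ if the family $\{I_0,I_1,\dots,I_n\}$ is itself a Koszul filtration; equivalently, for each $1\le k\le n$ the right ideal $\{a\in R: x_ka\in I_{k-1}\}$ equals $I_j$ for some $j$. *)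

theory Defs
  imports Main "HOL-Library.Sublist"
begin

text \<open>Words are lists of letters;
  letter i (0 \<le> i < n) stands for the generator x_(i+1), so the order of letters
  0 < 1 < ... < n-1 is the order x_1 < ... < x_n. A noncommutative polynomial is a
  function from words to coefficients; F n is the set of those with finite support
  in words over the letters {0..<n}.\<close>

type_synonym 'k ncpoly = "nat list \<Rightarrow> 'k"

definition ncF :: "nat \<Rightarrow> ('k::zero) ncpoly set" where
  "ncF n = {f. finite {w. f w \<noteq> 0} \<and> (\<forall>w. f w \<noteq> 0 \<longrightarrow> set w \<subseteq> {..<n})}"

definition nc_zero :: "('k::zero) ncpoly" where
  "nc_zero = (\<lambda>w. 0)"

definition nc_add :: "('k::plus) ncpoly \<Rightarrow> 'k ncpoly \<Rightarrow> 'k ncpoly" where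
  "nc_add f g = (\<lambda>w. f w + g w)"

definition nc_mul :: "('k::comm_semiring_1) ncpoly \<Rightarrow> 'k ncpoly \<Rightarrow> 'k ncpoly" where
  "nc_mul f g = (\<lambda>w. \<Sum>i\<le>length w. f (take i w) * g (drop i w))"

definition nc_mono :: "nat list \<Rightarrow> ('k::{zero,one}) ncpoly" where
  "nc_mono u = (\<lambda>w. if w = u then 1 else 0)"

definition nc_var :: "nat \<Rightarrow> ('k::{zero,one}) ncpoly" where
  "nc_var i = nc_mono [i]"

definition two_sided_ideal :: "nat \<Rightarrow> ('k::field) ncpoly set \<Rightarrow> bool" where
  "two_sided_ideal n I \<longleftrightarrow> I \<subseteq> ncF n \<and> nc_zero \<in> I \<and>
     (\<forall>f\<in>I. \<forall>g\<in>I. nc_add f g \<in> I) \<and>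
     (\<forall>f\<in>I. \<forall>a\<in>ncF n. nc_mul a f \<in> I \<and> nc_mul f a \<in> I)"

definition ideal_gen :: "nat \<Rightarrow> ('k::field) ncpoly set \<Rightarrow> 'k ncpoly set" where
  "ideal_gen n S = \<Inter>{I. two_sided_ideal n I \<and> S \<subseteq> I}"

definition homogeneous_set :: "('k::zero) ncpoly set \<Rightarrow> bool" where
  "homogeneous_set I \<longleftrightarrow> (\<forall>f\<in>I. \<forall>d. (\<lambda>w. if length w = d then f w else 0) \<in> I)"

text \<open>R = F/I is a standard algebra with x_1..x_n a basis of R_1: I is a homogeneous
  two-sided ideal containing no nonzero element of degree \<le> 1.\<close>
definition standard_ideal :: "nat \<Rightarrow> ('k::field) ncpoly set \<Rightarrow> bool" where
  "standard_ideal n I \<longleftrightarrow> two_sided_ideal n I \<and> homogeneous_set I \<and>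
     (\<forall>f\<in>I. \<forall>w. length w \<le> 1 \<longrightarrow> f w = 0)"

text \<open>Preimage in F of the right ideal I_k = x_1 R + ... + x_k R of R = F/I.\<close>
definition flag_ideal :: "nat \<Rightarrow> ('k::field) ncpoly set \<Rightarrow> nat \<Rightarrow> 'k ncpoly set" where
  "flag_ideal n I k = {f. \<exists>g h. g \<in> I \<and> (\<forall>i<k. h i \<in> ncF n) \<and>
       f = (\<lambda>w. g w + (\<Sum>i<k. nc_mul (nc_var i) (h i) w))}"

text \<open>Initially Koszul with Groebner flag (x_1,...,x_n): for each 1 \<le> k \<le> n,
  (I_{k-1} : x_k) = I_j for some j (computed via preimages in F).\<close>
definition initially_koszul :: "nat \<Rightarrow> ('k::field) ncpoly set \<Rightarrow> bool" where
  "initially_koszul n I \<longleftrightarrow>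
     (\<forall>k\<in>{1..n}. \<exists>j\<le>n.
        {a \<in> ncF n. nc_mul (nc_var (k - 1)) a \<in> flag_ideal n I (k - 1)} = flag_ideal n I j)"

definition deglex_less :: "nat list \<Rightarrow> nat list \<Rightarrow> bool" where
  "deglex_less u v \<longleftrightarrow> length u < length v \<or>
     (length u = length v \<and> (u, v) \<in> lexord {(a, b). a < b})"

definition lm :: "('k::zero) ncpoly \<Rightarrow> nat list" where
  "lm f = (THE w. f w \<noteq> 0 \<and> (\<forall>v. f v \<noteq> 0 \<longrightarrow> v = w \<or> deglex_less v w))"

definition groebner_basis :: "nat \<Rightarrow> ('k::field) ncpoly set \<Rightarrow> 'k ncpoly set \<Rightarrow> bool" where
  "groebner_basis n I G \<longleftrightarrow> G \<subseteq> I \<and> nc_zero \<notin> G \<and>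
     (\<forall>f\<in>I. f \<noteq> nc_zero \<longrightarrow> (\<exists>g\<in>G. sublist (lm g) (lm f)))"

definition reduced_groebner_basis :: "nat \<Rightarrow> ('k::field) ncpoly set \<Rightarrow> 'k ncpoly set \<Rightarrow> bool" where
  "reduced_groebner_basis n I G \<longleftrightarrow> groebner_basis n I G \<and>
     (\<forall>g\<in>G. g (lm g) = 1) \<and>
     (\<forall>g\<in>G. \<forall>w. g w \<noteq> 0 \<longrightarrow>
        (\<forall>g'\<in>G. (g' \<noteq> g \<or> w \<noteq> lm g) \<longrightarrow> \<not> sublist (lm g') w))"

end

theory Submission
  imports Defs "HOL-Library.List_Lenlexorder"
begin

text \<open>Call a word normal if it contains no leading monomial of \<open>G\<close>. Every polynomial is
  congruent modulo \<open>I\<close> to a combination of normal words, each of the degree of one of its own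
  words and deglex-below it. Hence a normal polynomial lies in (the preimage of) \<open>I\<^sub>k\<close> only if
  all its words begin with one of \<open>x\<^sub>1, \<dots>, x\<^sub>k\<close>, so the colon ideals of the flag can be
  computed on normal words. If \<open>(I\<^bsub>k-1\<^esub> : x\<^sub>k) = I\<^sub>j\<close>, then \<open>x\<^sub>k x\<^sub>i\<close> is a leading monomial
  for every \<open>i \<le> j\<close>; and for \<open>g \<in> G\<close> with \<open>lm g = x\<^sub>k u\<close> the cofactor of \<open>x\<^sub>k\<close> in \<open>g\<close> lies
  in \<open>I\<^sub>j\<close>, so \<open>u\<close> starts with some \<open>x\<^sub>i\<close>, \<open>i \<le> j\<close>, and reducedness of \<open>G\<close> forces
  \<open>u = x\<^sub>i\<close>. Conversely, for quadratic \<open>G\<close> with the closure condition,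
  \<open>(I\<^bsub>k-1\<^esub> : x\<^sub>k) = I\<^sub>j\<close> for the largest \<open>j\<close> with \<open>x\<^sub>k x\<^sub>j \<in> lm G\<close> (\<open>j = 0\<close> if there is
  none). Both conditions depend only on \<open>lm G\<close>, and the monomials \<open>lm G\<close> form the reduced
  Groebner basis of the monomial ideal they generate, which gives (iii).\<close>

section \<open>Noncommutative polynomials\<close>

definition nc_smult :: "'k::times \<Rightarrow> 'k ncpoly \<Rightarrow> 'k ncpoly" where
  "nc_smult c f = (\<lambda>w. c * f w)"

lemma nc_mul_mono_left:
  "nc_mul (nc_mono p) f w =
     (if take (length p) w = p then f (drop (length p) w) else (0::'k::comm_semiring_1))"
proof -
  have "nc_mul (nc_mono p) f w = (\<Sum>i\<le>length w. if i = length p then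
      (if take (length p) w = p then f (drop (length p) w) else 0) else (0::'k))"
    unfolding nc_mul_def nc_mono_def
    by (intro sum.cong refl) (auto simp: min_def split: if_splits)
  then show ?thesis
    by (auto simp: min_def)
qed

lemma nc_mul_mono_right:
  "nc_mul f (nc_mono s) w =
     (if length s \<le> length w \<and> drop (length w - length s) w = s
      then f (take (length w - length s) w) else (0::'k::comm_semiring_1))"
proof -
  have "nc_mul f (nc_mono s) w = (\<Sum>i\<le>length w. if i = length w - length s then
      (if length s \<le> length w \<and> drop (length w - length s) w = s
       then f (take (length w - length s) w) else 0) else (0::'k))"
    unfolding nc_mul_def nc_mono_def
    by (intro sum.cong refl) auto
  then show ?thesis
    by auto
qed

lemma nc_mul_var_Nil [simp]: "nc_mul (nc_var k) f [] = (0::'k::comm_semiring_1)"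
  by (simp add: nc_var_def nc_mul_mono_left)

lemma nc_mul_var_Cons [simp]:
  "nc_mul (nc_var k) f (c # u) = (if c = k then f u else (0::'k::comm_semiring_1))"
  by (simp add: nc_var_def nc_mul_mono_left)

lemma nc_mul_mono_mono:
  "nc_mul (nc_mono u) (nc_mono v) = (nc_mono (u @ v) :: 'k::comm_semiring_1 ncpoly)"
  by (rule ext, subst nc_mul_mono_left) (auto simp: nc_mono_def append_eq_conv_conj, metis append_take_drop_id)

lemma nc_mul_add_right: "nc_mul f (nc_add g h) = nc_add (nc_mul f g) (nc_mul f h)"
  by (rule ext) (simp add: nc_mul_def nc_add_def distrib_left sum.distrib)

lemma nc_mul_mono_Nil [simp]: "nc_mul (nc_mono []) f = (f :: 'k::comm_semiring_1 ncpoly)"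
  by (rule ext) (simp add: nc_mul_mono_left)

lemma nc_mul_smult_left: "nc_mul (nc_smult c f) g = nc_smult c (nc_mul f g)"
  by (rule ext) (simp add: nc_mul_def nc_smult_def sum_distrib_left mult.assoc)

lemma nc_smult_eq_mul: "nc_smult c f = nc_mul (nc_smult c (nc_mono [])) f"
  by (simp add: nc_mul_smult_left)

lemma nc_sandwich_at:
  "nc_mul (nc_mul (nc_mono p) f) (nc_mono s) (p @ u @ s) = (f u :: 'k::comm_semiring_1)"
  by (simp add: nc_mul_mono_left nc_mul_mono_right)

lemma nc_sandwich_nonzero:
  assumes "nc_mul (nc_mul (nc_mono p) f) (nc_mono s) v \<noteq> (0 :: 'k::comm_semiring_1)"
  obtains u where "v = p @ u @ s" "f u \<noteq> 0"
proof -
  let ?m = "length v - length s"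
  have v: "length s \<le> length v" "drop ?m v = s" "take (length p) (take ?m v) = p"
    and f: "f (drop (length p) (take ?m v)) \<noteq> 0"
    using assms by (auto simp: nc_mul_mono_left nc_mul_mono_right split: if_splits)
  have "v = take ?m v @ drop ?m v"
    by simp
  also have "take ?m v = take (length p) (take ?m v) @ drop (length p) (take ?m v)"
    by (rule append_take_drop_id[symmetric])
  finally show ?thesis
    using that v f by simp
qed

lemma nc_zero_in_ncF: "nc_zero \<in> ncF n"
  by (auto simp: ncF_def nc_zero_def)

lemma nc_mono_in_ncF: "set w \<subseteq> {..<n} \<Longrightarrow> nc_mono w \<in> ncF n"
  by (auto simp: ncF_def nc_mono_def)

lemma nc_var_in_ncF: "k < n \<Longrightarrow> nc_var k \<in> ncF n"
  unfolding nc_var_def by (rule nc_mono_in_ncF) auto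

lemma ncF_support_subset:
  assumes "f \<in> ncF n" "\<And>w. g w \<noteq> 0 \<Longrightarrow> f w \<noteq> 0"
  shows "g \<in> ncF n"
proof -
  have "{w. g w \<noteq> 0} \<subseteq> {w. f w \<noteq> 0}"
    using assms(2) by auto
  then show ?thesis
    using assms by (auto simp: ncF_def elim: finite_subset)
qed

lemma nc_smult_in_ncF: "(f :: 'k::comm_semiring_1 ncpoly) \<in> ncF n \<Longrightarrow> nc_smult c f \<in> ncF n"
  by (erule ncF_support_subset) (auto simp: nc_smult_def)

lemma nc_add_in_ncF:
  assumes "(f :: 'k::comm_monoid_add ncpoly) \<in> ncF n" "g \<in> ncF n"
  shows "nc_add f g \<in> ncF n"
proof -
  have "{w. f w + g w \<noteq> 0} \<subseteq> {w. f w \<noteq> 0} \<union> {w. g w \<noteq> 0}"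
    by auto
  then show ?thesis
    using assms by (auto simp: ncF_def nc_add_def elim: finite_subset)
qed

lemma ncF_diff:
  assumes "(f :: 'k::comm_ring_1 ncpoly) \<in> ncF n" "g \<in> ncF n"
  shows "(\<lambda>w. f w - g w) \<in> ncF n"
  using nc_add_in_ncF[OF assms(1) nc_smult_in_ncF[OF assms(2), of "-1"]]
  by (simp add: nc_add_def nc_smult_def)

lemma nc_mul_nonzero:
  assumes "nc_mul f g w \<noteq> (0 :: 'k::comm_semiring_1)"
  obtains i where "f (take i w) \<noteq> 0" "g (drop i w) \<noteq> 0"
proof -
  obtain i where "f (take i w) * g (drop i w) \<noteq> 0"
    using assms unfolding nc_mul_def by (auto elim: sum.not_neutral_contains_not_neutral)
  then show ?thesis
    using that by (metis mult_zero_left mult_zero_right)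
qed

lemma nc_mul_in_ncF:
  assumes "(f :: 'k::comm_semiring_1 ncpoly) \<in> ncF n" "g \<in> ncF n"
  shows "nc_mul f g \<in> ncF n"
proof -
  have supp: "{w. nc_mul f g w \<noteq> 0} \<subseteq> (\<lambda>(u, v). u @ v) ` ({u. f u \<noteq> 0} \<times> {v. g v \<noteq> 0})"
  proof
    fix w assume "w \<in> {w. nc_mul f g w \<noteq> 0}"
    then obtain i where "f (take i w) \<noteq> 0" "g (drop i w) \<noteq> 0"
      using nc_mul_nonzero by blast
    then show "w \<in> (\<lambda>(u, v). u @ v) ` ({u. f u \<noteq> 0} \<times> {v. g v \<noteq> 0})"
      by (auto intro!: image_eqI[of _ _ "(take i w, drop i w)"])
  qed
  have "finite {w. nc_mul f g w \<noteq> 0}"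
    using assms by (intro finite_subset[OF supp]) (auto simp: ncF_def)
  moreover have "set w \<subseteq> {..<n}" if "nc_mul f g w \<noteq> 0" for w
    using supp that assms by (fastforce simp: ncF_def)
  ultimately show ?thesis
    by (auto simp: ncF_def)
qed

lemma ncF_sum:
  assumes "finite A" "\<And>i. i \<in> A \<Longrightarrow> (f i :: 'k::comm_monoid_add ncpoly) \<in> ncF n"
  shows "(\<lambda>w. \<Sum>i\<in>A. f i w) \<in> ncF n"
  using assms
proof (induction A rule: finite_induct)
  case empty
  then show ?case
    using nc_zero_in_ncF by (simp add: nc_zero_def)
next
  case (insert x A)
  then have "nc_add (f x) (\<lambda>w. \<Sum>i\<in>A. f i w) \<in> ncF n"
    by (intro nc_add_in_ncF) auto
  then show ?case
    using insert by (simp add: nc_add_def)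
qed

lemma ncF_Cons_shift:
  assumes "f \<in> ncF n"
  shows "(\<lambda>v. f (k # v)) \<in> ncF n"
proof -
  have "finite (Cons k -` {w. f w \<noteq> 0})"
    using assms by (intro finite_vimageI) (auto simp: ncF_def)
  moreover have "set v \<subseteq> {..<n}" if "f (k # v) \<noteq> 0" for v
  proof -
    have "set (k # v) \<subseteq> {..<n}"
      using assms that unfolding ncF_def by blast
    then show ?thesis
      by simp
  qed
  ultimately show ?thesis
    by (simp add: ncF_def vimage_def)
qed

lemma ncF_induct [consumes 1, case_names zero add smult mono]:
  assumes f: "(f :: 'k::comm_semiring_1 ncpoly) \<in> ncF n"
    and zero: "P nc_zero"
    and add: "\<And>g h. P g \<Longrightarrow> P h \<Longrightarrow> P (nc_add g h)"
    and smult: "\<And>c g. P g \<Longrightarrow> P (nc_smult c g)"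
    and mono: "\<And>v. f v \<noteq> 0 \<Longrightarrow> P (nc_mono v)"
  shows "P f"
proof -
  have partial_sums: "P (\<lambda>w. \<Sum>v\<in>A. nc_smult (f v) (nc_mono v) w)"
    if "finite A" "A \<subseteq> {v. f v \<noteq> 0}" for A
    using that
  proof (induction A rule: finite_induct)
    case empty
    then show ?case
      using zero by (simp add: nc_zero_def)
  next
    case (insert x A)
    have "(\<lambda>w. \<Sum>v\<in>insert x A. nc_smult (f v) (nc_mono v) w) =
          nc_add (nc_smult (f x) (nc_mono x)) (\<lambda>w. \<Sum>v\<in>A. nc_smult (f v) (nc_mono v) w)"
      using insert by (simp add: nc_add_def)
    then show ?case
      using insert add smult mono by auto
  qed
  have fin: "finite {v. f v \<noteq> 0}"
    using f by (simp add: ncF_def)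
  have "(\<lambda>w. \<Sum>v | f v \<noteq> 0. nc_smult (f v) (nc_mono v) w) = f"
  proof
    fix w
    have "nc_smult (f v) (nc_mono v) w = (if v = w then f v else 0)" for v
      by (simp add: nc_smult_def nc_mono_def)
    then show "(\<Sum>v | f v \<noteq> 0. nc_smult (f v) (nc_mono v) w) = f w"
      using fin by (simp add: sum.delta)
  qed
  then show ?thesis
    using partial_sums[OF fin subset_refl] by simp
qed

section \<open>Leading monomials\<close>

lemma deglex_less_iff_less: "deglex_less u v \<longleftrightarrow> u < v"
  by (auto simp: deglex_less_def list_less_def lenlex_conv lexord_lex)

lemma less_append_context:
  fixes u v :: "nat list"
  assumes "u < v"
  shows "p @ u @ s < p @ v @ s"
proof -
  have "irrefl {(a, b :: nat). a < b}" by (simp add: irrefl_def)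
  then show ?thesis
    using assms by (simp add: list_less_def lenlex_append1)
qed

lemma hd_le_hd_if_le:
  fixes u v :: "nat list"
  assumes "u \<le> v" "length u = length v"
  shows "hd u \<le> hd v"
  using assms by (cases u; cases v) (auto simp: Cons_le_Cons)

lemma lm_eq_Max:
  assumes fin: "finite {v. f v \<noteq> 0}" and nz: "f \<noteq> nc_zero"
  shows "lm f = Max {v. f v \<noteq> 0}"
  unfolding lm_def deglex_less_iff_less
proof (rule the_equality)
  let ?m = "Max {v. f v \<noteq> 0}"
  have "{v. f v \<noteq> 0} \<noteq> {}"
    using nz by (auto simp: nc_zero_def)
  then have "f ?m \<noteq> 0"
    using Max_in[OF fin] by blast
  moreover have le_m: "v \<le> ?m" if "f v \<noteq> 0" for v
    using Max_ge[OF fin] that by blast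
  ultimately show "f ?m \<noteq> 0 \<and> (\<forall>v. f v \<noteq> 0 \<longrightarrow> v = ?m \<or> v < ?m)"
    using le_less by blast
  fix w assume w: "f w \<noteq> 0 \<and> (\<forall>v. f v \<noteq> 0 \<longrightarrow> v = w \<or> v < w)"
  then have "?m = w \<or> ?m < w"
    using \<open>f ?m \<noteq> 0\<close> by blast
  moreover have "w \<le> ?m"
    using w le_m by blast
  ultimately show "w = ?m"
    using leD by blast
qed

lemma lm_nonzero:
  assumes "f \<in> ncF n" "f \<noteq> nc_zero"
  shows "f (lm f) \<noteq> 0"
proof -
  have fin: "finite {v. f v \<noteq> 0}"
    using assms(1) by (simp add: ncF_def)
  moreover have "{v. f v \<noteq> 0} \<noteq> {}"
    using assms(2) by (auto simp: nc_zero_def)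
  ultimately show ?thesis
    using Max_in lm_eq_Max[OF fin assms(2)] by fastforce
qed

lemma le_lm:
  assumes "f \<in> ncF n" "f v \<noteq> 0"
  shows "v \<le> lm f"
proof -
  have fin: "finite {v. f v \<noteq> 0}"
    using assms(1) by (simp add: ncF_def)
  moreover have "f \<noteq> nc_zero"
    using assms(2) by (auto simp: nc_zero_def)
  ultimately show ?thesis
    using Max_ge assms(2) lm_eq_Max by fastforce
qed

lemma lm_nc_mono: "lm (nc_mono w :: 'k::zero_neq_one ncpoly) = w"
  unfolding lm_def by (rule the_equality) (auto simp: nc_mono_def split: if_splits)

section \<open>Flag ideals\<close>

definition heads_below :: "nat \<Rightarrow> 'k::zero ncpoly \<Rightarrow> bool" where
  "heads_below k f \<longleftrightarrow> (\<forall>w. f w \<noteq> 0 \<longrightarrow> w \<noteq> [] \<and> hd w < k)"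

lemma heads_below_sum_var_mul:
  "heads_below k (\<lambda>w. \<Sum>i<k. nc_mul (nc_var i) (h i) w :: 'k::comm_semiring_1)"
  unfolding heads_below_def
proof (intro allI impI)
  fix w assume "(\<Sum>i<k. nc_mul (nc_var i) (h i) w) \<noteq> 0"
  then obtain i where "i < k" "nc_mul (nc_var i) (h i) w \<noteq> 0"
    by (auto elim: sum.not_neutral_contains_not_neutral)
  then show "w \<noteq> [] \<and> hd w < k"
    by (cases w) (auto split: if_splits)
qed

lemma heads_below_eq_sum_var_mul:
  assumes "heads_below k (f :: 'k::comm_semiring_1 ncpoly)"
  shows "f = (\<lambda>w. \<Sum>i<k. nc_mul (nc_var i) (\<lambda>v. f (i # v)) w)"
proof
  fix w
  show "f w = (\<Sum>i<k. nc_mul (nc_var i) (\<lambda>v. f (i # v)) w)"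
  proof (cases w)
    case Nil
    have "f [] = 0"
      using assms unfolding heads_below_def by blast
    then show ?thesis
      using Nil by simp
  next
    case (Cons c u)
    then have "(\<Sum>i<k. nc_mul (nc_var i) (\<lambda>v. f (i # v)) w) = (\<Sum>i<k. if i = c then f w else 0)"
      by (intro sum.cong) auto
    also have "\<dots> = f w"
      using assms Cons by (auto simp: heads_below_def)
    finally show ?thesis
      by simp
  qed
qed

text \<open>With the 0-based letters of the free algebra, \<open>flag_colon n I k\<close> is the preimage in F
  of the colon ideal \<open>(I\<^sub>k : x\<^sub>k\<^sub>+\<^sub>1)\<close>.\<close>
definition flag_colon :: "nat \<Rightarrow> 'k::field ncpoly set \<Rightarrow> nat \<Rightarrow> 'k ncpoly set" where
  "flag_colon n I k = {a \<in> ncF n. nc_mul (nc_var k) a \<in> flag_ideal n I k}"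

lemma initially_koszul_iff_flag_colon:
  "initially_koszul n I \<longleftrightarrow> (\<forall>k<n. \<exists>j\<le>n. flag_colon n I k = flag_ideal n I j)"
  unfolding initially_koszul_def flag_colon_def image_Suc_lessThan[symmetric]
  by (simp add: lessThan_def)

locale nc_ideal =
  fixes n :: nat and I :: "'k::field ncpoly set"
  assumes two_sided: "two_sided_ideal n I"
begin

lemma ideal_ncF: "f \<in> I \<Longrightarrow> f \<in> ncF n"
  using two_sided by (auto simp: two_sided_ideal_def)

lemma ideal_zero: "nc_zero \<in> I"
  using two_sided by (simp add: two_sided_ideal_def)

lemma ideal_add: "f \<in> I \<Longrightarrow> g \<in> I \<Longrightarrow> nc_add f g \<in> I"
  using two_sided by (simp add: two_sided_ideal_def)

lemma ideal_mul_left: "f \<in> I \<Longrightarrow> a \<in> ncF n \<Longrightarrow> nc_mul a f \<in> I"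
  using two_sided by (simp add: two_sided_ideal_def)

lemma ideal_mul_right: "f \<in> I \<Longrightarrow> a \<in> ncF n \<Longrightarrow> nc_mul f a \<in> I"
  using two_sided by (simp add: two_sided_ideal_def)

lemma ideal_smult:
  assumes "f \<in> I"
  shows "nc_smult c f \<in> I"
proof -
  have "nc_smult c (nc_mono []) \<in> ncF n"
    by (intro nc_smult_in_ncF nc_mono_in_ncF) simp
  then show ?thesis
    using ideal_mul_left[OF assms] nc_smult_eq_mul by metis
qed

lemma ideal_diff: "f \<in> I \<Longrightarrow> g \<in> I \<Longrightarrow> (\<lambda>w. f w - g w) \<in> I"
  using ideal_add[of f "nc_smult (-1) g"] ideal_smult[of g "-1"]
  by (simp add: nc_add_def nc_smult_def)

lemma ideal_sandwich:
  "f \<in> I \<Longrightarrow> set p \<subseteq> {..<n} \<Longrightarrow> set s \<subseteq> {..<n} \<Longrightarrow>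
     nc_mul (nc_mul (nc_mono p) f) (nc_mono s) \<in> I"
  by (intro ideal_mul_left ideal_mul_right nc_mono_in_ncF)

lemma flag_ideal_eq:
  assumes "k \<le> n"
  shows "flag_ideal n I k = {nc_add g d | g d. g \<in> I \<and> d \<in> ncF n \<and> heads_below k d}"
proof (intro set_eqI iffI)
  fix f assume "f \<in> flag_ideal n I k"
  then obtain g h where g: "g \<in> I" and h: "\<forall>i<k. h i \<in> ncF n"
    and f: "f = (\<lambda>w. g w + (\<Sum>i<k. nc_mul (nc_var i) (h i) w))"
    unfolding flag_ideal_def by blast
  let ?d = "\<lambda>w. \<Sum>i<k. nc_mul (nc_var i) (h i) w"
  have "?d \<in> ncF n"
    using h assms by (intro ncF_sum) (auto intro!: nc_mul_in_ncF nc_var_in_ncF)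
  then show "f \<in> {nc_add g d | g d. g \<in> I \<and> d \<in> ncF n \<and> heads_below k d}"
    using g f heads_below_sum_var_mul[of k h] by (auto simp: nc_add_def)
next
  fix f assume "f \<in> {nc_add g d | g d. g \<in> I \<and> d \<in> ncF n \<and> heads_below k d}"
  then obtain g d where g: "g \<in> I" and d: "d \<in> ncF n" "heads_below k d" and f: "f = nc_add g d"
    by blast
  have "f = (\<lambda>w. g w + (\<Sum>i<k. nc_mul (nc_var i) (\<lambda>v. d (i # v)) w))"
  proof
    fix w
    show "f w = g w + (\<Sum>i<k. nc_mul (nc_var i) (\<lambda>v. d (i # v)) w)"
      using f fun_cong[OF heads_below_eq_sum_var_mul[OF d(2)], of w] by (simp add: nc_add_def)
  qed
  moreover have "\<forall>i<k. (\<lambda>v. d (i # v)) \<in> ncF n"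
    using d(1) by (blast intro: ncF_Cons_shift)
  ultimately show "f \<in> flag_ideal n I k"
    unfolding flag_ideal_def using g
    by (intro CollectI exI[where x = g] exI[where x = "\<lambda>i v. d (i # v)"]) simp
qed

lemma flag_ideal_ncF: "k \<le> n \<Longrightarrow> f \<in> flag_ideal n I k \<Longrightarrow> f \<in> ncF n"
  by (auto simp: flag_ideal_eq intro: nc_add_in_ncF ideal_ncF)

lemma heads_below_in_flag_ideal:
  assumes "k \<le> n" "d \<in> ncF n" "heads_below k d"
  shows "d \<in> flag_ideal n I k"
proof -
  have "d = nc_add nc_zero d"
    by (simp add: nc_add_def nc_zero_def)
  then show ?thesis
    unfolding flag_ideal_eq[OF assms(1)] using assms ideal_zero by blast
qed

lemma flag_ideal_zero: "k \<le> n \<Longrightarrow> nc_zero \<in> flag_ideal n I k"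
  using heads_below_in_flag_ideal[of k nc_zero] nc_zero_in_ncF[of n]
  by (simp add: heads_below_def nc_zero_def)

lemma flag_ideal_add_ideal:
  assumes "k \<le> n" "f \<in> flag_ideal n I k" "h \<in> I"
  shows "nc_add f h \<in> flag_ideal n I k"
proof -
  obtain g d where "g \<in> I" "d \<in> ncF n" "heads_below k d" "f = nc_add g d"
    using assms(2) unfolding flag_ideal_eq[OF assms(1)] by blast
  moreover have "nc_add (nc_add g d) h = nc_add (nc_add g h) d"
    by (auto simp: nc_add_def)
  ultimately show ?thesis
    unfolding flag_ideal_eq[OF assms(1)] using assms(3) ideal_add by auto
qed

lemma flag_ideal_add:
  assumes "k \<le> n" "f \<in> flag_ideal n I k" "f' \<in> flag_ideal n I k"
  shows "nc_add f f' \<in> flag_ideal n I k"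
proof -
  obtain g d where "g \<in> I" "d \<in> ncF n" "heads_below k d" "f = nc_add g d"
    using assms(2) unfolding flag_ideal_eq[OF assms(1)] by blast
  moreover obtain g' d' where "g' \<in> I" "d' \<in> ncF n" "heads_below k d'" "f' = nc_add g' d'"
    using assms(3) unfolding flag_ideal_eq[OF assms(1)] by blast
  moreover have "heads_below k (nc_add d d')" if "heads_below k d" "heads_below k d'"
    using that unfolding heads_below_def nc_add_def by (metis add.right_neutral)
  moreover have "nc_add (nc_add g d) (nc_add g' d') = nc_add (nc_add g g') (nc_add d d')"
    by (auto simp: nc_add_def)
  ultimately show ?thesis
    unfolding flag_ideal_eq[OF assms(1)] by (auto intro: ideal_add nc_add_in_ncF)
qed

lemma flag_ideal_smult:
  assumes "k \<le> n" "f \<in> flag_ideal n I k"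
  shows "nc_smult c f \<in> flag_ideal n I k"
proof -
  obtain g d where "g \<in> I" "d \<in> ncF n" "heads_below k d" "f = nc_add g d"
    using assms(2) unfolding flag_ideal_eq[OF assms(1)] by blast
  moreover have "heads_below k (nc_smult c d)" if "heads_below k d"
    using that by (simp add: heads_below_def nc_smult_def)
  moreover have "nc_smult c (nc_add g d) = nc_add (nc_smult c g) (nc_smult c d)"
    by (auto simp: nc_add_def nc_smult_def algebra_simps)
  ultimately show ?thesis
    unfolding flag_ideal_eq[OF assms(1)] by (auto intro: ideal_smult nc_smult_in_ncF)
qed

lemma var_in_flag_ideal: "i < j \<Longrightarrow> j \<le> n \<Longrightarrow> nc_var i \<in> flag_ideal n I j"
  by (intro heads_below_in_flag_ideal nc_var_in_ncF)
    (auto simp: heads_below_def nc_var_def nc_mono_def)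

end

section \<open>Normal forms modulo a reduced Groebner basis\<close>

locale reduced_gb =
  fixes n :: nat and I G :: "'k::field ncpoly set"
  assumes standard: "standard_ideal n I"
    and reduced: "reduced_groebner_basis n I G"

sublocale reduced_gb \<subseteq> nc_ideal
  using standard by unfold_locales (simp add: standard_ideal_def)

context reduced_gb
begin

lemma homogeneous_component_in_ideal: "f \<in> I \<Longrightarrow> (\<lambda>w. if length w = d then f w else 0) \<in> I"
  using standard by (simp add: standard_ideal_def homogeneous_set_def)

lemma ideal_vanishes_short: "f \<in> I \<Longrightarrow> length w \<le> 1 \<Longrightarrow> f w = 0"
  using standard by (simp add: standard_ideal_def)

lemma G_in_ideal: "g \<in> G \<Longrightarrow> g \<in> I"
  using reduced by (auto simp: reduced_groebner_basis_def groebner_basis_def)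

lemma lm_divisible_by_G: "f \<in> I \<Longrightarrow> f \<noteq> nc_zero \<Longrightarrow> \<exists>g\<in>G. sublist (lm g) (lm f)"
  using reduced by (simp add: reduced_groebner_basis_def groebner_basis_def)

lemma G_lm_coeff: "g \<in> G \<Longrightarrow> g (lm g) = 1"
  using reduced by (simp add: reduced_groebner_basis_def)

lemma G_reduced:
  "g \<in> G \<Longrightarrow> g w \<noteq> 0 \<Longrightarrow> g' \<in> G \<Longrightarrow> g' \<noteq> g \<or> w \<noteq> lm g \<Longrightarrow> \<not> sublist (lm g') w"
  using reduced unfolding reduced_groebner_basis_def by blast

lemma G_ncF: "g \<in> G \<Longrightarrow> g \<in> ncF n"
  by (intro ideal_ncF G_in_ideal)

lemma G_le_lm: "g \<in> G \<Longrightarrow> g v \<noteq> 0 \<Longrightarrow> v \<le> lm g"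
  by (rule le_lm[OF G_ncF])

lemma length_lm_ge_2: "g \<in> G \<Longrightarrow> 2 \<le> length (lm g)"
  using ideal_vanishes_short[OF G_in_ideal, of g "lm g"] G_lm_coeff[of g] by force

lemma lm_letters: "g \<in> G \<Longrightarrow> set (lm g) \<subseteq> {..<n}"
  using G_ncF[of g] G_lm_coeff[of g] by (auto simp: ncF_def)

lemma lm_antichain: "g \<in> G \<Longrightarrow> g' \<in> G \<Longrightarrow> sublist (lm g') (lm g) \<Longrightarrow> g' = g"
  using G_reduced[of g "lm g" g'] G_lm_coeff[of g] by auto

text \<open>The part of \<open>g\<close> outside the degree of \<open>lm g\<close> lies in \<open>I\<close> and has no word divisible by
  a leading monomial, so it vanishes.\<close>
lemma G_homogeneous:
  assumes g: "g \<in> G" and v: "g v \<noteq> 0"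
  shows "length v = length (lm g)"
proof (rule ccontr)
  assume ne: "length v \<noteq> length (lm g)"
  let ?e = "\<lambda>w. g w - (if length w = length (lm g) then g w else 0)"
  have e: "?e \<in> I"
    using G_in_ideal[OF g] by (intro ideal_diff homogeneous_component_in_ideal)
  have "?e \<noteq> nc_zero"
    using ne v by (auto simp: nc_zero_def fun_eq_iff)
  then obtain g' where g': "g' \<in> G" "sublist (lm g') (lm ?e)"
    using lm_divisible_by_G[OF e] by blast
  have "?e (lm ?e) \<noteq> 0"
    using lm_nonzero[OF ideal_ncF[OF e] \<open>?e \<noteq> nc_zero\<close>] .
  then have "g (lm ?e) \<noteq> 0" "lm ?e \<noteq> lm g"
    by (auto split: if_splits)
  then show False
    using G_reduced[OF g _ g'(1)] g'(2) by blast
qed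

definition normal_word :: "nat list \<Rightarrow> bool" where
  "normal_word w \<longleftrightarrow> (\<forall>g\<in>G. \<not> sublist (lm g) w)"

lemma normal_word_sublist: "normal_word w \<Longrightarrow> sublist u w \<Longrightarrow> normal_word u"
  unfolding normal_word_def using sublist_order.order.trans by blast

lemma not_normal_word_lm: "g \<in> G \<Longrightarrow> \<not> normal_word (lm g)"
  unfolding normal_word_def by auto

lemma normal_word_G_word: "g \<in> G \<Longrightarrow> g v \<noteq> 0 \<Longrightarrow> v \<noteq> lm g \<Longrightarrow> normal_word v"
  unfolding normal_word_def using G_reduced by blast

lemma normal_word_proper_sublist_lm:
  assumes g: "g \<in> G" and u: "sublist u (lm g)" "u \<noteq> lm g"
  shows "normal_word u"
  unfolding normal_word_def
proof (intro ballI notI)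
  fix g' assume g': "g' \<in> G" and "sublist (lm g') u"
  then have "sublist (lm g') (lm g)"
    using u(1) sublist_order.order.trans by blast
  then have "g' = g"
    using lm_antichain[OF g g'] by blast
  then show False
    using \<open>sublist (lm g') u\<close> u sublist_order.order.antisym by blast
qed

lemma ideal_normal_eq_zero:
  assumes f: "f \<in> I" and normal: "\<And>v. f v \<noteq> 0 \<Longrightarrow> normal_word v"
  shows "f = nc_zero"
proof (rule ccontr)
  assume nz: "f \<noteq> nc_zero"
  then obtain g where "g \<in> G" "sublist (lm g) (lm f)"
    using lm_divisible_by_G[OF f] by blast
  moreover have "normal_word (lm f)"
    using normal lm_nonzero[OF ideal_ncF[OF f] nz] by blast
  ultimately show False
    unfolding normal_word_def by blast
qed

definition reduces_within :: "(nat list \<Rightarrow> bool) \<Rightarrow> 'k ncpoly \<Rightarrow> bool" where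
  "reduces_within B f \<longleftrightarrow> (\<exists>r h. h \<in> I \<and> r \<in> ncF n \<and> f = nc_add r h \<and>
     (\<forall>v. r v \<noteq> 0 \<longrightarrow> normal_word v \<and> B v))"

lemma reduces_within_zero: "reduces_within B nc_zero"
  unfolding reduces_within_def
  by (intro exI[where x = nc_zero]) (simp add: ideal_zero nc_zero_in_ncF, simp add: nc_add_def nc_zero_def)

lemma reduces_within_add:
  assumes "reduces_within B f" "reduces_within B f'"
  shows "reduces_within B (nc_add f f')"
proof -
  obtain r h where "h \<in> I" "r \<in> ncF n" "f = nc_add r h" "\<forall>v. r v \<noteq> 0 \<longrightarrow> normal_word v \<and> B v"
    using assms(1) unfolding reduces_within_def by blast
  moreover obtain r' h' where "h' \<in> I" "r' \<in> ncF n" "f' = nc_add r' h'"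
    "\<forall>v. r' v \<noteq> 0 \<longrightarrow> normal_word v \<and> B v"
    using assms(2) unfolding reduces_within_def by blast
  moreover have "nc_add (nc_add r h) (nc_add r' h') = nc_add (nc_add r r') (nc_add h h')"
    by (auto simp: nc_add_def)
  moreover have "\<forall>v. nc_add r r' v \<noteq> 0 \<longrightarrow> normal_word v \<and> B v"
    if "\<forall>v. r v \<noteq> 0 \<longrightarrow> normal_word v \<and> B v" "\<forall>v. r' v \<noteq> 0 \<longrightarrow> normal_word v \<and> B v"
    using that unfolding nc_add_def by (metis add.right_neutral)
  ultimately show ?thesis
    unfolding reduces_within_def by (metis ideal_add nc_add_in_ncF)
qed

lemma reduces_within_smult:
  assumes "reduces_within B f"
  shows "reduces_within B (nc_smult c f)"
proof -
  obtain r h where "h \<in> I" "r \<in> ncF n" "f = nc_add r h" "\<forall>v. r v \<noteq> 0 \<longrightarrow> normal_word v \<and> B v"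
    using assms unfolding reduces_within_def by blast
  moreover have "nc_smult c (nc_add r h) = nc_add (nc_smult c r) (nc_smult c h)"
    by (auto simp: nc_add_def nc_smult_def algebra_simps)
  moreover have "\<forall>v. nc_smult c r v \<noteq> 0 \<longrightarrow> normal_word v \<and> B v"
    if "\<forall>v. r v \<noteq> 0 \<longrightarrow> normal_word v \<and> B v"
    using that by (simp add: nc_smult_def)
  ultimately show ?thesis
    unfolding reduces_within_def by (metis ideal_smult nc_smult_in_ncF)
qed

lemma reduces_within_add_ideal:
  assumes "reduces_within B f" "h' \<in> I"
  shows "reduces_within B (nc_add f h')"
proof -
  obtain r h where "h \<in> I" "r \<in> ncF n" "f = nc_add r h" "\<forall>v. r v \<noteq> 0 \<longrightarrow> normal_word v \<and> B v"
    using assms(1) unfolding reduces_within_def by blast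
  moreover have "nc_add (nc_add r h) h' = nc_add r (nc_add h h')"
    by (auto simp: nc_add_def)
  ultimately show ?thesis
    unfolding reduces_within_def using assms(2) ideal_add by metis
qed

lemma reduces_within_mono:
  "reduces_within B f \<Longrightarrow> (\<And>v. B v \<Longrightarrow> B' v) \<Longrightarrow> reduces_within B' f"
  unfolding reduces_within_def by blast

lemma reduction_step:
  assumes g: "g \<in> G" and w: "w = p @ lm g @ s" "set w \<subseteq> {..<n}"
  obtains h d where "h \<in> I" "d \<in> ncF n" "nc_mono w = nc_add d h"
    "\<And>v. d v \<noteq> 0 \<Longrightarrow> length v = length w \<and> v < w"
proof -
  define h where "h = nc_mul (nc_mul (nc_mono p) g) (nc_mono s)"
  have h: "h \<in> I"
    unfolding h_def using G_in_ideal[OF g] w by (intro ideal_sandwich) auto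
  define d where "d = (\<lambda>v. nc_mono w v - h v)"
  have "d \<in> ncF n"
    unfolding d_def using w(2) h by (intro ncF_diff nc_mono_in_ncF ideal_ncF)
  moreover have "length v = length w \<and> v < w" if "d v \<noteq> 0" for v
  proof -
    have "h w = 1"
      using G_lm_coeff[OF g] by (simp add: h_def w nc_sandwich_at)
    then have "v \<noteq> w" and hv: "h v \<noteq> 0"
      using that by (auto simp: d_def nc_mono_def split: if_splits)
    obtain u where u: "v = p @ u @ s" "g u \<noteq> 0"
      using hv unfolding h_def by (rule nc_sandwich_nonzero)
    then have "u \<noteq> lm g"
      using \<open>v \<noteq> w\<close> w(1) by blast
    then have "u < lm g" "length u = length (lm g)"
      using G_le_lm[OF g u(2)] G_homogeneous[OF g u(2)] by auto
    then show ?thesis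
      using u(1) w(1) less_append_context by auto
  qed
  moreover have "nc_mono w = nc_add d h"
    by (auto simp: d_def nc_add_def)
  ultimately show ?thesis
    using that h by blast
qed

lemma reduces_within_nc_mono:
  "set w \<subseteq> {..<n} \<Longrightarrow> reduces_within (\<lambda>v. length v = length w \<and> v \<le> w) (nc_mono w)"
proof (induction w rule: less_induct)
  case (less w)
  show ?case
  proof (cases "normal_word w")
    case True
    have "nc_mono w = nc_add (nc_mono w) (nc_zero :: 'k ncpoly)"
      by (rule ext) (simp add: nc_add_def nc_zero_def)
    moreover have "\<forall>v. (nc_mono w v :: 'k) \<noteq> 0 \<longrightarrow> normal_word v \<and> length v = length w \<and> v \<le> w"
      using True by (simp add: nc_mono_def)
    ultimately show ?thesis
      unfolding reduces_within_def using ideal_zero nc_mono_in_ncF[OF less.prems] by blast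
  next
    case False
    then obtain g p s where g: "g \<in> G" and w: "w = p @ lm g @ s"
      unfolding normal_word_def sublist_def by blast
    obtain h d where h: "h \<in> I" and d: "d \<in> ncF n" and w_eq: "nc_mono w = nc_add d h"
      and below: "\<And>v. d v \<noteq> 0 \<Longrightarrow> length v = length w \<and> v < w"
      using reduction_step[OF g w less.prems] by blast
    have "reduces_within (\<lambda>v. length v = length w \<and> v \<le> w) d"
      using d
    proof (induction rule: ncF_induct)
      case (mono v)
      then have "v < w" "set v \<subseteq> {..<n}"
        using below d by (auto simp: ncF_def)
      then have "reduces_within (\<lambda>x. length x = length v \<and> x \<le> v) (nc_mono v)"
        by (rule less.IH)
      then show ?case
        by (rule reduces_within_mono) (use below[OF mono] in auto)
    qed (auto intro: reduces_within_zero reduces_within_add reduces_within_smult)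
    then show ?thesis
      unfolding w_eq using h by (rule reduces_within_add_ideal)
  qed
qed

lemma normal_form:
  assumes "f \<in> ncF n"
  shows "reduces_within (\<lambda>v. \<exists>u. f u \<noteq> 0 \<and> length v = length u \<and> v \<le> u) f"
proof -
  define B where "B = (\<lambda>v. \<exists>u. f u \<noteq> 0 \<and> length v = length u \<and> v \<le> u)"
  have "reduces_within B f"
    using assms
  proof (induction rule: ncF_induct)
    case (mono v)
    then have "set v \<subseteq> {..<n}"
      using assms by (auto simp: ncF_def)
    then show ?case
      using mono by (auto simp: B_def elim!: reduces_within_mono[OF reduces_within_nc_mono])
  qed (auto intro: reduces_within_zero reduces_within_add reduces_within_smult)
  then show ?thesis
    by (simp add: B_def)
qed

text \<open>Write \<open>f = g + d\<close> with \<open>g \<in> I\<close> and all words of \<open>d\<close> starting below \<open>k\<close>. Then \<open>f\<close> and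
  the normal form of \<open>d\<close> differ by an element of \<open>I\<close> with normal support, so they coincide;
  and the normal form does not raise first letters.\<close>
lemma normal_flag_ideal_heads_below:
  assumes k: "k \<le> n" and f: "f \<in> flag_ideal n I k"
    and normal: "\<And>v. f v \<noteq> 0 \<Longrightarrow> normal_word v"
  shows "heads_below k f"
proof -
  obtain g d where g: "g \<in> I" and d: "d \<in> ncF n" "heads_below k d" and f_eq: "f = nc_add g d"
    using f unfolding flag_ideal_eq[OF k] by blast
  obtain r h where h: "h \<in> I" and d_eq: "d = nc_add r h"
    and r: "\<forall>v. r v \<noteq> 0 \<longrightarrow> normal_word v \<and> (\<exists>u. d u \<noteq> 0 \<and> length v = length u \<and> v \<le> u)"
    using normal_form[OF d(1)] unfolding reduces_within_def by blast
  have "nc_add g h = (\<lambda>w. f w - r w)"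
    by (auto simp: f_eq d_eq nc_add_def)
  moreover have "nc_add g h \<in> I"
    using g h by (rule ideal_add)
  ultimately have "(\<lambda>w. f w - r w) = nc_zero"
    using normal r by (intro ideal_normal_eq_zero) (auto, metis diff_self diff_zero)
  then have "f = r"
    by (auto simp: nc_zero_def fun_eq_iff)
  show ?thesis
    unfolding heads_below_def
  proof (intro allI impI)
    fix w assume "f w \<noteq> 0"
    then obtain u where u: "d u \<noteq> 0" "length w = length u" "w \<le> u"
      using r \<open>f = r\<close> by blast
    then have "u \<noteq> []" "hd u < k"
      using d(2) by (auto simp: heads_below_def)
    then show "w \<noteq> [] \<and> hd w < k"
      using u hd_le_hd_if_le[of w u] by fastforce
  qed
qed

end

section \<open>Colon ideals of the flag\<close>

context reduced_gb
begin

lemma var_in_flag_colon_imp_lm: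
  assumes k: "k < n" and i: "i < n" and x: "nc_var i \<in> flag_colon n I k"
  shows "[k, i] \<in> lm ` G"
proof (cases "normal_word [k, i]")
  case True
  have "nc_mono [k, i] \<in> flag_ideal n I k"
    using x by (simp add: flag_colon_def nc_var_def nc_mul_mono_mono)
  then have "heads_below k (nc_mono [k, i] :: 'k ncpoly)"
    using True k by (intro normal_flag_ideal_heads_below) (auto simp: nc_mono_def split: if_splits)
  then have "k < k"
    unfolding heads_below_def by (metis list.sel(1) nc_mono_def one_neq_zero)
  then show ?thesis
    by simp
next
  case False
  then obtain g where g: "g \<in> G" "sublist (lm g) [k, i]"
    unfolding normal_word_def by blast
  then have "lm g = [k, i]"
    using length_lm_ge_2[OF g(1)] sublist_length_le[OF g(2)]
    by (intro subseq_same_length sublist_imp_subseq) auto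
  then show ?thesis
    using g(1) by force
qed

text \<open>Multiplying the cofactor by the letter \<open>k\<close> gives back \<open>g\<close> up to the words not starting with
  \<open>k\<close>; these start below \<open>k\<close>, since every word of \<open>g\<close> has the length of \<open>lm g = k # u\<close> and is not
  above it.\<close>
lemma G_cofactor_in_flag_colon:
  assumes g: "g \<in> G" and lm: "lm g = k # u"
  shows "(\<lambda>v. g (k # v)) \<in> flag_colon n I k"
proof -
  have k: "k < n"
    using lm_letters[OF g] lm by auto
  define e where "e = (\<lambda>w. if w \<noteq> [] \<and> hd w = k then 0 else - g w)"
  have "e \<in> ncF n"
    by (rule ncF_support_subset[OF G_ncF[OF g]]) (auto simp: e_def split: if_splits)
  moreover have "heads_below k e"
    unfolding heads_below_def
  proof (intro allI impI)
    fix w assume "e w \<noteq> 0"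
    then have gw: "g w \<noteq> 0" and not_k: "\<not> (w \<noteq> [] \<and> hd w = k)"
      by (auto simp: e_def split: if_splits)
    have "length w = length (lm g)"
      by (rule G_homogeneous[OF g gw])
    then have "w \<noteq> []" "hd w \<le> k"
      using hd_le_hd_if_le[OF G_le_lm[OF g gw]] lm by auto
    then show "w \<noteq> [] \<and> hd w < k"
      using not_k by auto
  qed
  ultimately have "nc_add e g \<in> flag_ideal n I k"
    using k g by (intro flag_ideal_add_ideal heads_below_in_flag_ideal G_in_ideal) auto
  moreover have "nc_mul (nc_var k) (\<lambda>v. g (k # v)) = nc_add e g"
  proof
    fix w
    show "nc_mul (nc_var k) (\<lambda>v. g (k # v)) w = nc_add e g w"
      by (cases w) (auto simp: e_def nc_add_def)
  qed
  ultimately show ?thesis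
    unfolding flag_colon_def using ncF_Cons_shift[OF G_ncF[OF g]] by simp
qed

lemma G_cofactor_normal:
  assumes g: "g \<in> G" and lm: "lm g = k # u" and v: "g (k # v) \<noteq> 0"
  shows "normal_word v"
proof (cases "k # v = lm g")
  case True
  then show ?thesis
    using normal_word_proper_sublist_lm[OF g, of v] lm by (simp add: sublist_Cons_right)
next
  case False
  then have "normal_word (k # v)"
    using normal_word_G_word[OF g v] by blast
  then show ?thesis
    by (rule normal_word_sublist) (simp add: sublist_Cons_right)
qed

lemma lm_tail_head_below:
  assumes g: "g \<in> G" "lm g = k # u"
    and j: "j \<le> n" and colon: "flag_colon n I k = flag_ideal n I j"
  shows "u \<noteq> [] \<and> hd u < j"
proof -
  have "(\<lambda>v. g (k # v)) \<in> flag_ideal n I j"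
    using G_cofactor_in_flag_colon[OF g] colon by blast
  then have "heads_below j (\<lambda>v. g (k # v))"
    using j G_cofactor_normal[OF g] by (intro normal_flag_ideal_heads_below)
  moreover have "g (k # u) = 1"
    using G_lm_coeff[OF g(1)] g(2) by simp
  ultimately show ?thesis
    unfolding heads_below_def by (metis one_neq_zero)
qed

lemma quadratic_if_initially_koszul:
  assumes ik: "initially_koszul n I" and g: "g \<in> G"
  shows "length (lm g) = 2"
proof -
  obtain k u where lm: "lm g = k # u"
    using length_lm_ge_2[OF g] by (cases "lm g") auto
  have k: "k < n"
    using lm_letters[OF g] lm by auto
  obtain j where j: "j \<le> n" "flag_colon n I k = flag_ideal n I j"
    using ik k unfolding initially_koszul_iff_flag_colon by blast
  have u: "u \<noteq> []" "hd u < j"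
    using lm_tail_head_below[OF g lm j] by auto
  have "hd u < n"
    using u(1) lm_letters[OF g] lm by (auto dest: hd_in_set)
  then obtain g' where g': "g' \<in> G" "lm g' = [k, hd u]"
    using var_in_flag_colon_imp_lm[OF k] var_in_flag_ideal[OF u(2) j(1)] j(2) by force
  have "sublist (lm g') (lm g)"
    using lm u(1) g'(2) by (cases u) (auto simp: sublist_Cons_right)
  then have "g' = g"
    by (rule lm_antichain[OF g g'(1)])
  then show ?thesis
    using g'(2) by simp
qed

lemma lm_pairs_closed_if_initially_koszul:
  assumes ik: "initially_koszul n I" and kj: "[k, j] \<in> lm ` G" and ij: "i < j"
  shows "[k, i] \<in> lm ` G"
proof -
  obtain g where g: "g \<in> G" "lm g = [k, j]"
    using kj by auto
  have k: "k < n" "j < n"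
    using lm_letters[OF g(1)] g(2) by auto
  obtain j' where j': "j' \<le> n" "flag_colon n I k = flag_ideal n I j'"
    using ik k unfolding initially_koszul_iff_flag_colon by blast
  have "j < j'"
    using lm_tail_head_below[OF g j'] by simp
  then show ?thesis
    using var_in_flag_colon_imp_lm[OF k(1)] var_in_flag_ideal[of i j'] j' ij k by auto
qed

lemma normal_word_Cons_iff:
  assumes quad: "\<forall>g\<in>G. length (lm g) = 2"
  shows "normal_word (k # u) \<longleftrightarrow> normal_word u \<and> (u = [] \<or> [k, hd u] \<notin> lm ` G)"
proof -
  have "sublist (lm g) (k # u) \<longleftrightarrow> sublist (lm g) u \<or> (u \<noteq> [] \<and> lm g = [k, hd u])"
    if g: "g \<in> G" for g
  proof -
    obtain x y where "lm g = [x, y]"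
      using quad g by (metis One_nat_def Suc_1 length_0_conv length_Suc_conv)
    then show ?thesis
      by (cases u) (auto simp: sublist_Cons_right)
  qed
  then show ?thesis
    unfolding normal_word_def by (auto simp: image_iff)
qed

lemma G_pair_word_head_below:
  assumes g: "g \<in> G" "lm g = [k, i]" and below: "\<forall>y<i. [k, y] \<in> lm ` G"
    and v: "g v \<noteq> 0" "v \<noteq> lm g"
  shows "v \<noteq> [] \<and> hd v < k"
proof -
  have "normal_word v" "v < [k, i]" "length v = 2"
    using normal_word_G_word[OF g(1) v] G_le_lm[OF g(1) v(1)] G_homogeneous[OF g(1) v(1)] v(2) g(2)
    by auto
  then obtain x y where xy: "v = [x, y]"
    by (metis One_nat_def Suc_1 length_0_conv length_Suc_conv)
  have "x \<le> k"
    using hd_le_hd_if_le[of v "[k, i]"] \<open>v < [k, i]\<close> xy by simp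
  moreover have "x \<noteq> k"
  proof
    assume "x = k"
    then have "y < i"
      using \<open>v < [k, i]\<close> xy by (simp add: Cons_less_Cons)
    then have "[k, y] \<in> lm ` G"
      using below by simp
    then show False
      using \<open>normal_word v\<close> xy \<open>x = k\<close> not_normal_word_lm by auto
  qed
  ultimately show ?thesis
    using xy by simp
qed

lemma mono_in_flag_ideal:
  assumes k: "k < n" and below: "\<forall>y\<le>i. [k, y] \<in> lm ` G" and u: "set u \<subseteq> {..<n}"
  shows "nc_mono (k # i # u) \<in> flag_ideal n I k"
proof -
  obtain g where g: "g \<in> G" "lm g = [k, i]"
    using below by auto
  define h where "h = nc_mul g (nc_mono u)"
  have h: "h \<in> I"
    unfolding h_def using G_in_ideal[OF g(1)] u by (intro ideal_mul_right nc_mono_in_ncF)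
  define e where "e = (\<lambda>w. nc_mono (k # i # u) w - h w)"
  have "set (k # i # u) \<subseteq> {..<n}"
    using lm_letters[OF g(1)] g(2) u by simp
  then have "e \<in> ncF n"
    unfolding e_def using h by (intro ncF_diff nc_mono_in_ncF ideal_ncF)
  moreover have "heads_below k e"
    unfolding heads_below_def
  proof (intro allI impI)
    fix w assume "e w \<noteq> 0"
    moreover have "h (k # i # u) = 1"
      using G_lm_coeff[OF g(1)] g(2) by (simp add: h_def nc_mul_mono_right)
    ultimately have hw: "h w \<noteq> 0" "w \<noteq> k # i # u"
      by (auto simp: e_def nc_mono_def split: if_splits)
    then obtain v where w: "w = v @ u" and gv: "g v \<noteq> 0"
      using nc_sandwich_nonzero[of "[]" g u w] by (auto simp: h_def)
    have "v \<noteq> lm g"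
      using hw(2) w g(2) by auto
    then show "w \<noteq> [] \<and> hd w < k"
      using G_pair_word_head_below[OF g _ gv] below w by auto
  qed
  ultimately have "nc_add e h \<in> flag_ideal n I k"
    using k h by (intro flag_ideal_add_ideal heads_below_in_flag_ideal) auto
  moreover have "nc_add e h = nc_mono (k # i # u)"
    by (auto simp: e_def nc_add_def)
  ultimately show ?thesis
    by simp
qed

lemma flag_ideal_subset_flag_colon:
  assumes k: "k < n" and j: "j \<le> n" and below: "\<forall>i<j. [k, i] \<in> lm ` G"
  shows "flag_ideal n I j \<subseteq> flag_colon n I k"
proof
  fix a assume a: "a \<in> flag_ideal n I j"
  then obtain g d where g: "g \<in> I" and d: "d \<in> ncF n" "heads_below j d" and a_eq: "a = nc_add g d"
    unfolding flag_ideal_eq[OF j] by blast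
  have "nc_mul (nc_var k) d \<in> flag_ideal n I k"
    using nc_mul_in_ncF[OF nc_var_in_ncF[OF k] d(1)]
  proof (induction rule: ncF_induct)
    case (mono v)
    then obtain w where v: "v = k # w" and "d w \<noteq> 0"
      by (cases v) (auto split: if_splits)
    then have "w \<noteq> [] \<and> hd w < j" "set w \<subseteq> {..<n}"
      using d unfolding heads_below_def ncF_def by auto
    then obtain i u where "w = i # u" "i < j" "set u \<subseteq> {..<n}"
      by (cases w) auto
    then show ?case
      using mono_in_flag_ideal[OF k] below v by auto
  qed (use k flag_ideal_zero flag_ideal_add flag_ideal_smult in auto)
  then have "nc_add (nc_mul (nc_var k) d) (nc_mul (nc_var k) g) \<in> flag_ideal n I k"
    using k g by (intro flag_ideal_add_ideal ideal_mul_left nc_var_in_ncF) auto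
  moreover have "nc_add (nc_mul (nc_var k) d) (nc_mul (nc_var k) g) = nc_mul (nc_var k) a"
    unfolding a_eq nc_mul_add_right by (auto simp: nc_add_def)
  ultimately show "a \<in> flag_colon n I k"
    unfolding flag_colon_def using flag_ideal_ncF[OF j a] by simp
qed

text \<open>For quadratic \<open>G\<close>, the product of the letter \<open>k\<close> with \<open>r\<close> is again normal, and a
  normal element of the flag ideal \<open>k\<close> cannot have words starting with \<open>k\<close>.\<close>
lemma var_mul_normal_in_flag_ideal_eq_zero:
  assumes quad: "\<forall>g\<in>G. length (lm g) = 2" and k: "k < n"
    and above: "\<forall>i\<ge>j. [k, i] \<notin> lm ` G"
    and r: "\<And>u. r u \<noteq> 0 \<Longrightarrow> normal_word u \<and> (u = [] \<or> j \<le> hd u)"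
    and kr: "nc_mul (nc_var k) r \<in> flag_ideal n I k"
  shows "r u = 0"
proof -
  have "heads_below k (nc_mul (nc_var k) r)"
    using k kr
  proof (rule normal_flag_ideal_heads_below[OF less_imp_le])
    fix w assume "nc_mul (nc_var k) r w \<noteq> 0"
    then obtain v where "w = k # v" "r v \<noteq> 0"
      by (cases w) (auto split: if_splits)
    then show "normal_word w"
      using r above normal_word_Cons_iff[OF quad] by blast
  qed
  then show "r u = 0"
    unfolding heads_below_def by (metis list.sel(1) nc_mul_var_Cons less_irrefl)
qed

lemma flag_colon_subset_flag_ideal:
  assumes quad: "\<forall>g\<in>G. length (lm g) = 2" and k: "k < n" and j: "j \<le> n"
    and below: "\<forall>i<j. [k, i] \<in> lm ` G" and above: "\<forall>i\<ge>j. [k, i] \<notin> lm ` G"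
  shows "flag_colon n I k \<subseteq> flag_ideal n I j"
proof
  fix a assume "a \<in> flag_colon n I k"
  then have a: "a \<in> ncF n" "nc_mul (nc_var k) a \<in> flag_ideal n I k"
    by (simp_all add: flag_colon_def)
  obtain r h where h: "h \<in> I" and r: "r \<in> ncF n" and a_eq: "a = nc_add r h"
    and r_normal: "\<forall>v. r v \<noteq> 0 \<longrightarrow> normal_word v"
    using normal_form[OF a(1)] unfolding reduces_within_def by blast
  define r1 where "r1 = (\<lambda>w. if w \<noteq> [] \<and> hd w < j then r w else 0)"
  define r2 where "r2 = (\<lambda>w. if w \<noteq> [] \<and> hd w < j then 0 else r w)"
  have r1: "r1 \<in> flag_ideal n I j"
    by (intro heads_below_in_flag_ideal[OF j] ncF_support_subset[OF r])
      (auto simp: r1_def heads_below_def split: if_splits)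
  have "nc_mul (nc_var k) r2 =
    nc_add (nc_add (nc_mul (nc_var k) a) (nc_smult (-1) (nc_mul (nc_var k) r1)))
      (nc_smult (-1) (nc_mul (nc_var k) h))"
  proof
    fix w
    show "nc_mul (nc_var k) r2 w = nc_add (nc_add (nc_mul (nc_var k) a)
      (nc_smult (-1) (nc_mul (nc_var k) r1))) (nc_smult (-1) (nc_mul (nc_var k) h)) w"
      by (cases w) (auto simp: nc_add_def nc_smult_def r1_def r2_def a_eq)
  qed
  also have "\<dots> \<in> flag_ideal n I k"
    using k a(2) h r1 flag_ideal_subset_flag_colon[OF k j below]
    by (intro flag_ideal_add_ideal flag_ideal_add flag_ideal_smult ideal_smult ideal_mul_left
        nc_var_in_ncF) (auto simp: flag_colon_def)
  finally have r2_zero: "r2 u = 0" for u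
    using r_normal by (intro var_mul_normal_in_flag_ideal_eq_zero[OF quad k above])
      (auto simp: r2_def split: if_splits)
  have "a = nc_add r1 h"
  proof
    fix w
    show "a w = nc_add r1 h w"
      using r2_zero[of w] by (auto simp: a_eq r1_def r2_def nc_add_def split: if_splits)
  qed
  then show "a \<in> flag_ideal n I j"
    using flag_ideal_add_ideal[OF j r1 h] by simp
qed

lemma initially_koszul_if_lm_pairs_closed:
  assumes quad: "\<forall>g\<in>G. length (lm g) = 2"
    and closed: "\<forall>k j i. [k, j] \<in> lm ` G \<and> i < j \<longrightarrow> [k, i] \<in> lm ` G"
  shows "initially_koszul n I"
  unfolding initially_koszul_iff_flag_colon
proof (intro allI impI)
  fix k assume k: "k < n"
  define j where "j = (LEAST j. [k, j] \<notin> lm ` G)"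
  have "[k, n] \<notin> lm ` G"
  proof
    assume "[k, n] \<in> lm ` G"
    then obtain g where "g \<in> G" "lm g = [k, n]"
      by auto
    then show False
      using lm_letters[of g] by auto
  qed
  then have j_le: "j \<le> n"
    unfolding j_def by (rule Least_le)
  have below: "\<forall>i<j. [k, i] \<in> lm ` G"
    unfolding j_def using not_less_Least by blast
  have "[k, j] \<notin> lm ` G"
    unfolding j_def using LeastI[of "\<lambda>j. [k, j] \<notin> lm ` G"] \<open>[k, n] \<notin> lm ` G\<close> .
  then have above: "\<forall>i\<ge>j. [k, i] \<notin> lm ` G"
    using closed by (metis order.not_eq_order_implies_strict)
  show "\<exists>j\<le>n. flag_colon n I k = flag_ideal n I j"
    using flag_colon_subset_flag_ideal[OF quad k j_le below above]
      flag_ideal_subset_flag_colon[OF k j_le below] j_le by blast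
qed

lemma quadratic_iff_length_lm:
  "(\<forall>g\<in>G. \<forall>w. g w \<noteq> 0 \<longrightarrow> length w = 2) \<longleftrightarrow> (\<forall>g\<in>G. length (lm g) = 2)"
  using G_homogeneous G_lm_coeff by (metis one_neq_zero)

theorem initially_koszul_iff_lm_pairs:
  "initially_koszul n I \<longleftrightarrow>
     (\<forall>g\<in>G. length (lm g) = 2) \<and> (\<forall>k j i. [k, j] \<in> lm ` G \<and> i < j \<longrightarrow> [k, i] \<in> lm ` G)"
  using quadratic_if_initially_koszul lm_pairs_closed_if_initially_koszul
    initially_koszul_if_lm_pairs_closed by blast

end

section \<open>Monomial ideals\<close>

definition monomial_ideal :: "nat \<Rightarrow> nat list set \<Rightarrow> 'k::zero ncpoly set" where
  "monomial_ideal n L = {f \<in> ncF n. \<forall>w. f w \<noteq> 0 \<longrightarrow> (\<exists>u\<in>L. sublist u w)}"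

lemma nc_mono_in_monomial_ideal:
  assumes "\<forall>u\<in>L. set u \<subseteq> {..<n}"
  shows "nc_mono ` L \<subseteq> (monomial_ideal n L :: 'k::zero_neq_one ncpoly set)"
proof
  fix f :: "'k ncpoly" assume "f \<in> nc_mono ` L"
  then obtain u where u: "u \<in> L" "f = nc_mono u"
    by blast
  then have "f \<in> ncF n"
    using assms nc_mono_in_ncF by blast
  moreover have "f w \<noteq> 0 \<Longrightarrow> w = u" for w
    using u by (simp add: nc_mono_def split: if_splits)
  ultimately show "f \<in> monomial_ideal n L"
    using u(1) by (auto simp: monomial_ideal_def)
qed

lemma two_sided_monomial_ideal: "two_sided_ideal n (monomial_ideal n L :: 'k::field ncpoly set)"
  unfolding two_sided_ideal_def
proof (intro conjI ballI)
  show "monomial_ideal n L \<subseteq> ncF n"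
    by (auto simp: monomial_ideal_def)
  show "nc_zero \<in> (monomial_ideal n L :: 'k ncpoly set)"
    by (simp add: monomial_ideal_def nc_zero_in_ncF, simp add: nc_zero_def)
next
  fix f g :: "'k ncpoly" assume f: "f \<in> monomial_ideal n L" and g: "g \<in> monomial_ideal n L"
  then have "nc_add f g \<in> ncF n"
    by (intro nc_add_in_ncF) (simp_all add: monomial_ideal_def)
  moreover have "\<exists>u\<in>L. sublist u w" if "nc_add f g w \<noteq> 0" for w
  proof -
    have "f w \<noteq> 0 \<or> g w \<noteq> 0"
      using that by (auto simp: nc_add_def)
    then show ?thesis
      using f g by (auto simp: monomial_ideal_def)
  qed
  ultimately show "nc_add f g \<in> monomial_ideal n L"
    by (simp add: monomial_ideal_def)
next
  fix f a :: "'k ncpoly" assume f: "f \<in> monomial_ideal n L" and a: "a \<in> ncF n"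
  have f': "f \<in> ncF n" "\<And>w. f w \<noteq> 0 \<Longrightarrow> \<exists>u\<in>L. sublist u w"
    using f by (auto simp: monomial_ideal_def)
  have "\<exists>u\<in>L. sublist u w" if nz: "nc_mul a f w \<noteq> 0" for w
  proof -
    obtain i where "f (drop i w) \<noteq> 0"
      using nc_mul_nonzero[OF nz] by blast
    then show ?thesis
      using f'(2) sublist_order.order.trans[OF _ sublist_drop] by blast
  qed
  moreover have "\<exists>u\<in>L. sublist u w" if nz: "nc_mul f a w \<noteq> 0" for w
  proof -
    obtain i where "f (take i w) \<noteq> 0"
      using nc_mul_nonzero[OF nz] by blast
    then show ?thesis
      using f'(2) sublist_order.order.trans[OF _ sublist_take] by blast
  qed
  ultimately show "nc_mul a f \<in> monomial_ideal n L" "nc_mul f a \<in> monomial_ideal n L"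
    unfolding monomial_ideal_def using nc_mul_in_ncF a f'(1) by blast+
qed

lemma ideal_gen_nc_mono_eq_monomial_ideal:
  assumes letters: "\<forall>u\<in>L. set u \<subseteq> {..<n}"
  shows "ideal_gen n (nc_mono ` L) = (monomial_ideal n L :: 'k::field ncpoly set)"
proof
  have "nc_mono ` L \<subseteq> (monomial_ideal n L :: 'k ncpoly set)"
    using letters by (rule nc_mono_in_monomial_ideal)
  then show "ideal_gen n (nc_mono ` L) \<subseteq> (monomial_ideal n L :: 'k ncpoly set)"
    unfolding ideal_gen_def using two_sided_monomial_ideal by (intro Inter_lower) blast
next
  show "(monomial_ideal n L :: 'k ncpoly set) \<subseteq> ideal_gen n (nc_mono ` L)"
    unfolding ideal_gen_def
  proof (intro subsetI InterI)
    fix f :: "'k ncpoly" and J :: "'k ncpoly set" assume f: "f \<in> monomial_ideal n L" and "J \<in> {J. two_sided_ideal n J \<and> nc_mono ` L \<subseteq> J}"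
    then have J: "two_sided_ideal n J" "nc_mono ` L \<subseteq> J"
      by auto
    interpret J: nc_ideal n J
      by (rule nc_ideal.intro[OF J(1)])
    have "f \<in> ncF n"
      using f by (simp add: monomial_ideal_def)
    then show "f \<in> J"
    proof (induction rule: ncF_induct)
      case (mono v)
      then obtain p u s where u: "u \<in> L" and v: "v = p @ u @ s" and "set v \<subseteq> {..<n}"
        using f unfolding monomial_ideal_def ncF_def sublist_def by blast
      then have "nc_mul (nc_mul (nc_mono p) (nc_mono u)) (nc_mono s) \<in> J"
        using J(2) by (intro J.ideal_sandwich) auto
      then show ?case
        by (simp add: v nc_mul_mono_mono)
    qed (auto intro: J.ideal_zero J.ideal_add J.ideal_smult)
  qed
qed

lemma standard_monomial_ideal:
  assumes "\<forall>u\<in>L. 2 \<le> length u"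
  shows "standard_ideal n (monomial_ideal n L :: 'k::field ncpoly set)"
  unfolding standard_ideal_def homogeneous_set_def
proof (intro conjI ballI allI impI)
  show "two_sided_ideal n (monomial_ideal n L :: 'k ncpoly set)"
    by (rule two_sided_monomial_ideal)
next
  fix f :: "'k ncpoly" and d assume "f \<in> monomial_ideal n L"
  then show "(\<lambda>w. if length w = d then f w else 0) \<in> monomial_ideal n L"
    unfolding monomial_ideal_def by (auto intro: ncF_support_subset split: if_splits)
next
  fix f :: "'k ncpoly" and w :: "nat list"
  assume "f \<in> monomial_ideal n L" "length w \<le> 1"
  then show "f w = 0"
    using assms sublist_length_le by (fastforce simp: monomial_ideal_def)
qed

lemma reduced_groebner_basis_monomial_ideal:
  assumes letters: "\<forall>u\<in>L. set u \<subseteq> {..<n}"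
    and antichain: "\<forall>u\<in>L. \<forall>v\<in>L. sublist u v \<longrightarrow> u = v"
  shows "reduced_groebner_basis n (monomial_ideal n L) (nc_mono ` L :: 'k::field ncpoly set)"
  unfolding reduced_groebner_basis_def groebner_basis_def
proof (intro conjI ballI allI impI)
  show "nc_mono ` L \<subseteq> (monomial_ideal n L :: 'k ncpoly set)"
    using letters by (rule nc_mono_in_monomial_ideal)
  show "nc_zero \<notin> (nc_mono ` L :: 'k ncpoly set)"
  proof
    assume "nc_zero \<in> (nc_mono ` L :: 'k ncpoly set)"
    then obtain u where "(nc_zero :: 'k ncpoly) = nc_mono u"
      by blast
    then have "(nc_zero :: 'k ncpoly) u = nc_mono u u"
      by simp
    then show False
      by (simp add: nc_zero_def nc_mono_def)
  qed
next
  fix f :: "'k ncpoly" assume f: "f \<in> monomial_ideal n L" "f \<noteq> nc_zero"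
  then have "f (lm f) \<noteq> 0"
    by (intro lm_nonzero[of f n]) (auto simp: monomial_ideal_def)
  then obtain u where "u \<in> L" "sublist u (lm f)"
    using f(1) by (auto simp: monomial_ideal_def)
  then show "\<exists>g\<in>(nc_mono ` L :: 'k ncpoly set). sublist (lm g) (lm f)"
    by (auto simp: lm_nc_mono)
next
  fix g :: "'k ncpoly" assume "g \<in> nc_mono ` L"
  then show "g (lm g) = 1"
    by (auto simp: lm_nc_mono, simp add: nc_mono_def)
next
  fix g g' :: "'k ncpoly" and w
  assume g: "g \<in> nc_mono ` L" and w: "g w \<noteq> 0" and g': "g' \<in> nc_mono ` L"
    and ne: "g' \<noteq> g \<or> w \<noteq> lm g"
  obtain u u' where u: "u \<in> L" "g = nc_mono u" and u': "u' \<in> L" "g' = nc_mono u'"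
    using g g' by blast
  have "w = u"
    using w u(2) by (simp add: nc_mono_def split: if_splits)
  then have "u' \<noteq> u"
    using ne u u' by (auto simp: lm_nc_mono)
  then show "\<not> sublist (lm g') w"
    using antichain u u' \<open>w = u\<close> by (auto simp: lm_nc_mono)
qed

context reduced_gb
begin

lemma initially_koszul_monomial_iff_lm_pairs:
  "initially_koszul n (ideal_gen n (nc_mono ` lm ` G :: 'b::field ncpoly set)) \<longleftrightarrow>
     (\<forall>g\<in>G. length (lm g) = 2) \<and> (\<forall>k j i. [k, j] \<in> lm ` G \<and> i < j \<longrightarrow> [k, i] \<in> lm ` G)"
proof -
  have letters: "\<forall>u\<in>lm ` G. set u \<subseteq> {..<n}"
    using lm_letters by blast
  have antichain: "\<forall>u\<in>lm ` G. \<forall>v\<in>lm ` G. sublist u v \<longrightarrow> u = v"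
    using lm_antichain by blast
  interpret M: reduced_gb n "monomial_ideal n (lm ` G)" "nc_mono ` lm ` G :: 'b ncpoly set"
  proof
    show "standard_ideal n (monomial_ideal n (lm ` G) :: 'b ncpoly set)"
      using length_lm_ge_2 by (intro standard_monomial_ideal) blast
    show "reduced_groebner_basis n (monomial_ideal n (lm ` G)) (nc_mono ` lm ` G :: 'b ncpoly set)"
      using letters antichain by (rule reduced_groebner_basis_monomial_ideal)
  qed
  have "lm ` (nc_mono ` lm ` G :: 'b ncpoly set) = lm ` G"
    by (simp add: image_image lm_nc_mono)
  then show ?thesis
    by (simp add: M.initially_koszul_iff_lm_pairs ideal_gen_nc_mono_eq_monomial_ideal[OF letters]
        lm_nc_mono)
qed

end

theorem mainTheorem7:
  fixes n :: nat and I G :: "('k::field) ncpoly set"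
  assumes "standard_ideal n I"
    and "reduced_groebner_basis n I G"
  shows "(initially_koszul n I \<longleftrightarrow>
            ((\<forall>g\<in>G. \<forall>w. g w \<noteq> 0 \<longrightarrow> length w = 2) \<and>
             (\<forall>k j i. [k, j] \<in> lm ` G \<and> i < j \<longrightarrow> [k, i] \<in> lm ` G)))
       \<and> (initially_koszul n I \<longleftrightarrow>
            initially_koszul n (ideal_gen n (nc_mono ` lm ` G)))"
proof -
  interpret reduced_gb n I G
    using assms by (rule reduced_gb.intro)
  show ?thesis
    by (simp add: initially_koszul_iff_lm_pairs initially_koszul_monomial_iff_lm_pairs
        quadratic_iff_length_lm)
qed

end
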